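(* Let $\mathfrak{R}=(G,G',S,\phi,\rho,\delta)$ be a reconciliation, $s\in V(S)\setminus L(S)$, and $x\in V(G')\setminus L(G')$ with $\rho(x)=s$. Then $x\in\Sigma(\mathfrak{R})$ if and only if $x$ is a minimal element of $\rho^{-1}(s)$ (with respect to the ancestor order of $G'$).
   Context: All trees are rooted binary trees whose root node has degree 1; every other non-leaf node $x$ has exactly two children $x_l,x_r$; $L(T)$ denotes leaves (root excluded). For nodes of a rooted tree, $y\le x$ means $x$ lies on the path from $y$ to the root. $G$ is a gene tree, $S$ a species tree, $\phi:L(G)\to L(S)$. A tree $G'$ is an extension of $G$ if $G$ is obtained from $G'$ by pruning some subtrees and suppressing degree-2 nodes. A map $\rho:V(G')\to V(S)$ is consistent with $S$ if $\rho(root(G'))=root(S)$ and every node $x$ of $G'$ with two children satisfies (D) $\rho(x)=\rho(x_l)=\rho(x_r)$ or (S) $\rho(x)_l=\rho(x_l)$ and $\rho(x)_r=\rho(x_r)$. A reconciliation $\mathfrak{R}=(G,G',S,\phi,\rho,\delta)$ consists of an extension $G'$ of $G$, a consistent $\rho$ with $\rho|_{L(G)}=\phi$, and an injective partial function $\delta$ from duplications to losses ($L(G')\setminus L(G)$) with $\rho(x)=\rho(\delta(x))$. $\Delta(\mathfrak{R})$ (duplications) is the set of nodes with two children satisfying (D), $\Sigma(\mathfrak{R})$ (speciations) those satisfying (S). *)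

theory Defs
  imports Main
begin

text \<open>Binary phylogenetic trees: the root has exactly one child, every
  other node has either 0 (leaf) or 2 children (left child = index 0, right = index 1).\<close>

record 'a rtree =
  nodes :: "'a set"
  root  :: "'a"
  ch    :: "'a \<Rightarrow> 'a list"

definition edges :: "'a rtree \<Rightarrow> ('a \<times> 'a) set" where
  "edges T = {(p, c). p \<in> nodes T \<and> c \<in> set (ch T p)}"

definition leaves :: "'a rtree \<Rightarrow> 'a set" where
  "leaves T = {v \<in> nodes T. v \<noteq> root T \<and> ch T v = []}"

text \<open>\<open>anc_le T y x\<close>: \<open>y \<le> x\<close>, i.e. x lies on the path from y to the root.\<close>
definition anc_le :: "'a rtree \<Rightarrow> 'a \<Rightarrow> 'a \<Rightarrow> bool" where
  "anc_le T y x \<longleftrightarrow> (x, y) \<in> (edges T)\<^sup>*"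

definition rooted_tree :: "'a rtree \<Rightarrow> bool" where
  "rooted_tree T \<longleftrightarrow> finite (nodes T) \<and> root T \<in> nodes T
     \<and> (\<forall>v. v \<notin> nodes T \<longrightarrow> ch T v = [])
     \<and> (\<forall>v\<in>nodes T. set (ch T v) \<subseteq> nodes T \<and> distinct (ch T v))
     \<and> (\<forall>p\<in>nodes T. root T \<notin> set (ch T p))
     \<and> (\<forall>v\<in>nodes T. v \<noteq> root T \<longrightarrow> (\<exists>!p. p \<in> nodes T \<and> v \<in> set (ch T p)))
     \<and> (\<forall>v\<in>nodes T. (root T, v) \<in> (edges T)\<^sup>*)"

definition binary_tree :: "'a rtree \<Rightarrow> bool" where
  "binary_tree T \<longleftrightarrow> rooted_tree T \<and> length (ch T (root T)) = 1
     \<and> (\<forall>v\<in>nodes T - {root T}. length (ch T v) = 0 \<or> length (ch T v) = 2)"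

definition prune_step :: "'a rtree \<Rightarrow> 'a rtree \<Rightarrow> bool" where
  "prune_step T T' \<longleftrightarrow> (\<exists>v\<in>nodes T. v \<noteq> root T \<and>
     (let R = {u. (v, u) \<in> (edges T)\<^sup>*} in
      T' = \<lparr>nodes = nodes T - R, root = root T,
            ch = (\<lambda>w. if w \<in> R then [] else filter (\<lambda>c. c \<noteq> v) (ch T w))\<rparr>))"

definition suppress_step :: "'a rtree \<Rightarrow> 'a rtree \<Rightarrow> bool" where
  "suppress_step T T' \<longleftrightarrow> (\<exists>v\<in>nodes T. v \<noteq> root T \<and> (\<exists>c. ch T v = [c] \<and>
      T' = \<lparr>nodes = nodes T - {v}, root = root T,
            ch = (\<lambda>w. if w = v then [] else map (\<lambda>u. if u = v then c else u) (ch T w))\<rparr>))"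

definition extension :: "'a rtree \<Rightarrow> 'a rtree \<Rightarrow> bool" where
  "extension G' G \<longleftrightarrow> binary_tree G \<and> binary_tree G' \<and> leaves G \<subseteq> leaves G'
     \<and> (G', G) \<in> {(A, B). prune_step A B \<or> suppress_step A B}\<^sup>*"

definition inner2 :: "'a rtree \<Rightarrow> 'a \<Rightarrow> bool" where
  "inner2 T x \<longleftrightarrow> x \<in> nodes T \<and> length (ch T x) = 2"

definition cond_D :: "'g rtree \<Rightarrow> ('g \<Rightarrow> 's) \<Rightarrow> 'g \<Rightarrow> bool" where
  "cond_D G' \<rho> x \<longleftrightarrow> \<rho> x = \<rho> (ch G' x ! 0) \<and> \<rho> x = \<rho> (ch G' x ! 1)"

definition cond_S :: "'g rtree \<Rightarrow> 's rtree \<Rightarrow> ('g \<Rightarrow> 's) \<Rightarrow> 'g \<Rightarrow> bool" where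
  "cond_S G' S \<rho> x \<longleftrightarrow> ch S (\<rho> x) = [\<rho> (ch G' x ! 0), \<rho> (ch G' x ! 1)]"

definition consistent :: "'g rtree \<Rightarrow> 's rtree \<Rightarrow> ('g \<Rightarrow> 's) \<Rightarrow> bool" where
  "consistent G' S \<rho> \<longleftrightarrow> \<rho> ` nodes G' \<subseteq> nodes S \<and> \<rho> (root G') = root S
     \<and> (\<forall>x. inner2 G' x \<longrightarrow> cond_D G' \<rho> x \<or> cond_S G' S \<rho> x)"

definition Dup :: "'g rtree \<Rightarrow> ('g \<Rightarrow> 's) \<Rightarrow> 'g set" where
  "Dup G' \<rho> = {x. inner2 G' x \<and> cond_D G' \<rho> x}"

definition Spec :: "'g rtree \<Rightarrow> 's rtree \<Rightarrow> ('g \<Rightarrow> 's) \<Rightarrow> 'g set" where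
  "Spec G' S \<rho> = {x. inner2 G' x \<and> cond_S G' S \<rho> x}"

definition reconciliation ::
  "'g rtree \<Rightarrow> 'g rtree \<Rightarrow> 's rtree \<Rightarrow> ('g \<Rightarrow> 's) \<Rightarrow> ('g \<Rightarrow> 's) \<Rightarrow> ('g \<rightharpoonup> 'g) \<Rightarrow> bool" where
  "reconciliation G G' S \<phi> \<rho> \<delta> \<longleftrightarrow>
     binary_tree G \<and> binary_tree S \<and> \<phi> ` leaves G \<subseteq> leaves S
     \<and> extension G' G \<and> consistent G' S \<rho> \<and> (\<forall>l\<in>leaves G. \<rho> l = \<phi> l)
     \<and> dom \<delta> \<subseteq> Dup G' \<rho> \<and> ran \<delta> \<subseteq> leaves G' - leaves G \<and> inj_on \<delta> (dom \<delta>)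
     \<and> (\<forall>x\<in>dom \<delta>. \<rho> x = \<rho> (the (\<delta> x)))"

definition minimal_preimage :: "'g rtree \<Rightarrow> ('g \<Rightarrow> 's) \<Rightarrow> 's \<Rightarrow> 'g \<Rightarrow> bool" where
  "minimal_preimage G' \<rho> s x \<longleftrightarrow> x \<in> nodes G' \<and> \<rho> x = s
     \<and> \<not> (\<exists>y\<in>nodes G'. \<rho> y = s \<and> anc_le G' y x \<and> y \<noteq> x)"

end

theory Submission
  imports Defs
begin

text \<open>A consistent map \<open>\<rho>\<close> is monotone for the ancestor orders of \<open>G'\<close> and \<open>S\<close>: along an edge
  of \<open>G'\<close> it either stays put (duplication) or moves to a child (speciation). At a speciation
  \<open>x\<close> both children are mapped to children of \<open>\<rho> x\<close>, so no descendant of \<open>x\<close> can return to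
  \<open>\<rho> x\<close> without a cycle in \<open>S\<close>; at a duplication both children stay at \<open>\<rho> x\<close>, so \<open>x\<close> is not
  minimal.\<close>

lemma binary_tree_rooted_tree: "binary_tree T \<Longrightarrow> rooted_tree T"
  unfolding binary_tree_def by (rule conjunct1)

lemma rooted_tree_edge_nodes:
  assumes "rooted_tree T" and "(p, c) \<in> edges T"
  shows "p \<in> nodes T" "c \<in> nodes T"
  using assms unfolding edges_def rooted_tree_def by auto

lemma rooted_tree_anc_le_root:
  assumes "rooted_tree T" and "v \<in> nodes T"
  shows "anc_le T v (root T)"
  using assms unfolding rooted_tree_def anc_le_def by blast

lemma rooted_tree_root_no_parent:
  assumes "rooted_tree T"
  shows "(p, root T) \<notin> edges T"
  using assms unfolding edges_def rooted_tree_def by blast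

lemma rooted_tree_parent_unique:
  assumes T: "rooted_tree T" and "(p, c) \<in> edges T" and "(q, c) \<in> edges T"
  shows "p = q"
proof -
  have "c \<in> nodes T" "c \<noteq> root T"
    using assms rooted_tree_edge_nodes rooted_tree_root_no_parent by metis+
  with assms show ?thesis unfolding rooted_tree_def edges_def by blast
qed

lemma rooted_tree_acyclic:
  assumes T: "rooted_tree T"
  shows "acyclic (edges T)"
proof -
  have "(v, v) \<notin> (edges T)\<^sup>+" if "(root T, v) \<in> (edges T)\<^sup>*" for v
    using that
  proof (induction rule: rtrancl_induct)
    case base
    show ?case
    proof
      assume "(root T, root T) \<in> (edges T)\<^sup>+"
      then show False using rooted_tree_root_no_parent[OF T] by (meson tranclD2)
    qed
  next
    case (step b c)
    show ?case
    proof
      assume "(c, c) \<in> (edges T)\<^sup>+"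
      then obtain p where cp: "(c, p) \<in> (edges T)\<^sup>*" and pc: "(p, c) \<in> edges T"
        by (meson tranclD2)
      have "p = b" using rooted_tree_parent_unique[OF T pc step.hyps(2)] .
      with cp step.hyps(2) have "(b, b) \<in> (edges T)\<^sup>+"
        by (meson rtrancl_into_trancl2)
      with step.IH show False by blast
    qed
  qed
  moreover have "(root T, v) \<in> (edges T)\<^sup>*" if "(v, v) \<in> (edges T)\<^sup>+" for v
    using that rooted_tree_edge_nodes[OF T] rooted_tree_anc_le_root[OF T]
    unfolding anc_le_def by (meson tranclD)
  ultimately show ?thesis unfolding acyclic_def by blast
qed

lemma binary_tree_inner2:
  assumes "binary_tree T" and "v \<in> nodes T - leaves T" and "v \<noteq> root T"
  shows "inner2 T v"
  using assms unfolding binary_tree_def leaves_def inner2_def by auto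

lemma binary_tree_parent_inner2:
  assumes "binary_tree T" and "(b, c) \<in> edges T" and "b \<noteq> root T"
  shows "inner2 T b"
proof -
  have "b \<in> nodes T" "ch T b \<noteq> []" using assms(2) unfolding edges_def by auto
  with assms(1,3) show ?thesis unfolding binary_tree_def inner2_def by auto
qed

lemma inner2_child_cases:
  assumes "inner2 T x" and "c \<in> set (ch T x)"
  shows "c = ch T x ! 0 \<or> c = ch T x ! 1"
  using assms unfolding inner2_def
  by (cases "ch T x"; cases "tl (ch T x)"; auto)

lemma consistent_nodes: "consistent G' S \<rho> \<Longrightarrow> x \<in> nodes G' \<Longrightarrow> \<rho> x \<in> nodes S"
  unfolding consistent_def by blast

lemma consistent_root: "consistent G' S \<rho> \<Longrightarrow> \<rho> (root G') = root S"
  unfolding consistent_def by (elim conjE)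

lemma consistent_Dup_or_Spec:
  assumes "consistent G' S \<rho>" and "inner2 G' x"
  shows "x \<in> Dup G' \<rho> \<or> x \<in> Spec G' S \<rho>"
  using assms unfolding consistent_def Dup_def Spec_def by blast

lemma Dup_child:
  assumes "x \<in> Dup G' \<rho>" and "c \<in> set (ch G' x)"
  shows "\<rho> c = \<rho> x"
  using assms inner2_child_cases unfolding Dup_def cond_D_def by fastforce

lemma Spec_child:
  assumes "x \<in> Spec G' S \<rho>" and "c \<in> set (ch G' x)"
  shows "\<rho> c \<in> set (ch S (\<rho> x))"
  using assms inner2_child_cases unfolding Spec_def cond_S_def by fastforce

lemma consistent_edge_anc_le:
  assumes G': "binary_tree G'" and S: "rooted_tree S" and C: "consistent G' S \<rho>"
    and bc: "(b, c) \<in> edges G'"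
  shows "anc_le S (\<rho> c) (\<rho> b)"
proof (cases "b = root G'")
  case True
  have "\<rho> c \<in> nodes S"
    using consistent_nodes[OF C] rooted_tree_edge_nodes[OF binary_tree_rooted_tree[OF G'] bc]
    by blast
  moreover have "\<rho> b = root S" using consistent_root[OF C] True by simp
  ultimately show ?thesis using rooted_tree_anc_le_root[OF S] by simp
next
  case False
  have cb: "c \<in> set (ch G' b)" using bc unfolding edges_def by simp
  have "inner2 G' b" using binary_tree_parent_inner2[OF G' bc False] .
  then consider "b \<in> Dup G' \<rho>" | "b \<in> Spec G' S \<rho>"
    using consistent_Dup_or_Spec[OF C] by blast
  then show ?thesis
  proof cases
    case 1
    then show ?thesis using Dup_child[OF 1 cb] unfolding anc_le_def by simp
  next
    case 2
    moreover have "\<rho> b \<in> nodes S"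
      using consistent_nodes[OF C] rooted_tree_edge_nodes[OF binary_tree_rooted_tree[OF G'] bc]
      by blast
    ultimately show ?thesis using Spec_child[OF _ cb] unfolding anc_le_def edges_def by blast
  qed
qed

lemma consistent_anc_le:
  assumes "binary_tree G'" and "rooted_tree S" and "consistent G' S \<rho>"
    and "anc_le G' y x"
  shows "anc_le S (\<rho> y) (\<rho> x)"
  using assms(4) unfolding anc_le_def
proof (induction rule: rtrancl_induct)
  case (step b c)
  have "(\<rho> b, \<rho> c) \<in> (edges S)\<^sup>*"
    using consistent_edge_anc_le[OF assms(1-3) step.hyps(2)] unfolding anc_le_def .
  with step.IH show ?case by (rule rtrancl_trans)
qed simp

lemma Spec_minimal_preimage:
  assumes G': "binary_tree G'" and S: "rooted_tree S" and C: "consistent G' S \<rho>"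
    and x: "x \<in> Spec G' S \<rho>"
  shows "minimal_preimage G' \<rho> (\<rho> x) x"
proof -
  have xn: "x \<in> nodes G'" using x unfolding Spec_def inner2_def by blast
  have no_lower: False if "anc_le G' y x" and "y \<noteq> x" and \<rho>y: "\<rho> y = \<rho> x" for y
  proof -
    from that have "(x, y) \<in> (edges G')\<^sup>+"
      unfolding anc_le_def by (auto dest: rtranclD)
    then obtain c where xc: "(x, c) \<in> edges G'" and cy: "(c, y) \<in> (edges G')\<^sup>*"
      by (meson tranclD)
    have "(\<rho> x, \<rho> c) \<in> edges S"
      using Spec_child[OF x] xc consistent_nodes[OF C xn] unfolding edges_def by blast
    moreover have "(\<rho> c, \<rho> x) \<in> (edges S)\<^sup>*"
      using consistent_anc_le[OF G' S C, of y c] cy \<rho>y unfolding anc_le_def by simp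
    ultimately have "(\<rho> x, \<rho> x) \<in> (edges S)\<^sup>+"
      by (meson rtrancl_into_trancl2)
    with rooted_tree_acyclic[OF S] show False unfolding acyclic_def by blast
  qed
  show ?thesis unfolding minimal_preimage_def using xn no_lower by auto
qed

lemma minimal_preimage_Spec:
  assumes G': "rooted_tree G'" and C: "consistent G' S \<rho>" and x: "inner2 G' x"
    and min: "minimal_preimage G' \<rho> s x"
  shows "x \<in> Spec G' S \<rho>"
proof (rule ccontr)
  assume "x \<notin> Spec G' S \<rho>"
  then have dup: "x \<in> Dup G' \<rho>" using consistent_Dup_or_Spec[OF C x] by blast
  define c where "c = ch G' x ! 0"
  have cx: "c \<in> set (ch G' x)" using x unfolding inner2_def c_def by simp
  then have xc: "(x, c) \<in> edges G'" using x unfolding inner2_def edges_def by blast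
  have "c \<noteq> x" using xc rooted_tree_acyclic[OF G'] unfolding acyclic_def by blast
  moreover have "\<rho> c = s" using Dup_child[OF dup cx] min unfolding minimal_preimage_def by simp
  moreover have "c \<in> nodes G'" "anc_le G' c x"
    using rooted_tree_edge_nodes[OF G' xc] xc unfolding anc_le_def by auto
  ultimately show False using min unfolding minimal_preimage_def by blast
qed

theorem lemma3:
  assumes "reconciliation G G' S \<phi> \<rho> \<delta>"
    and "s \<in> nodes S - leaves S"
    and "x \<in> nodes G' - leaves G'" and "x \<noteq> root G'"
    and "\<rho> x = s"
  shows "x \<in> Spec G' S \<rho> \<longleftrightarrow> minimal_preimage G' \<rho> s x"
proof -
  have C: "consistent G' S \<rho>" and G': "binary_tree G'" and "binary_tree S"
    using assms(1) unfolding reconciliation_def extension_def by blast+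
  then have S: "rooted_tree S" using binary_tree_rooted_tree by blast
  have "inner2 G' x" using binary_tree_inner2[OF G' assms(3,4)] .
  then show ?thesis
    using Spec_minimal_preimage[OF G' S C] minimal_preimage_Spec[OF binary_tree_rooted_tree[OF G'] C]
      assms(5)
    by (intro iffI) auto
qed

end
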